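(* Let $L = L_p + \varepsilon L_d \in \mathbb{DH}[t]$ be a line polynomial and $h \in \mathbb{R}[t]$ nonzero. Suppose there is a motion polynomial $C = P + \varepsilon D \in \mathbb{DH}[t]$ satisfying $$P\mathbf{k}\overline{P} = hL_p,\qquad -P\mathbf{k}\overline{D} - D\mathbf{k}\overline{P} = hL_d,\qquad P\overline{D} + D\overline{P} = 0,$$ and suppose there is $f \in \mathbb{R}[t]$, either linear or quadratic and irreducible over $\mathbb{R}$, such that $f^2$ divides $h/\gcd(\operatorname{rgcd}(L_p), h)$. Then there exist an integer $m \ge 1$ and a motion polynomial satisfying the same three equations with $h$ replaced by $h/f^{2m}$.
   Context: $\mathbb{H}$ denotes the real quaternions with units $\mathbf{i},\mathbf{j},\mathbf{k}$ and conjugation $\overline{p_0 + p_1\mathbf{i} + p_2\mathbf{j} + p_3\mathbf{k}} = p_0 - p_1\mathbf{i} - p_2\mathbf{j} - p_3\mathbf{k}$; $\mathbb{DH} = \mathbb{H} + \varepsilon\mathbb{H}$ with $\varepsilon^2=0$, $\varepsilon$ central. $\mathbb{H}[t]$, $\mathbb{DH}[t]$ are polynomial rings in a real indeterminate $t$ commuting with the coefficients; conjugation acts coefficientwise. A motion polynomial is $C = P + \varepsilon D \in \mathbb{DH}[t]$ with $P \ne 0$ and $P\overline{D} + D\overline{P} = 0$. A line polynomial is $L = L_p + \varepsilon L_d \in \mathbb{DH}[t]$ with $L_p, L_d$ vectorial (zero scalar part), $L_p\overline{L_d} + L_d\overline{L_p} = 0$, and $L_p \neq 0$. For $A \in \mathbb{H}[t]$,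 $\operatorname{rgcd}(A)$ is the monic gcd in $\mathbb{R}[t]$ of its four real coefficient polynomials. The three equations are equivalent to $C_\varepsilon\mathbf{k}\overline{C_\varepsilon} = hL$ (with $C_\varepsilon = P - \varepsilon D$) together with the Study condition. *)

theory Defs
  imports "HOL-Computational_Algebra.Computational_Algebra" "HOL-Computational_Algebra.Field_as_Ring"
begin

text \<open>Quaternion polynomials in H[t]: since the indeterminate t is real and commutes
with the coefficients, an element of H[t] is the same as a quaternion
p0 + p1 i + p2 j + p3 k with real polynomial components p0,...,p3.\<close>

datatype qpoly = QP (qc0: "real poly") (qc1: "real poly") (qc2: "real poly") (qc3: "real poly")

definition qzero :: qpoly where "qzero = QP 0 0 0 0"

definition qadd :: "qpoly \<Rightarrow> qpoly \<Rightarrow> qpoly" where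
  "qadd p q = QP (qc0 p + qc0 q) (qc1 p + qc1 q) (qc2 p + qc2 q) (qc3 p + qc3 q)"

definition qneg :: "qpoly \<Rightarrow> qpoly" where
  "qneg p = QP (- qc0 p) (- qc1 p) (- qc2 p) (- qc3 p)"

definition qmult :: "qpoly \<Rightarrow> qpoly \<Rightarrow> qpoly" where
  "qmult p q = QP
     (qc0 p * qc0 q - qc1 p * qc1 q - qc2 p * qc2 q - qc3 p * qc3 q)
     (qc0 p * qc1 q + qc1 p * qc0 q + qc2 p * qc3 q - qc3 p * qc2 q)
     (qc0 p * qc2 q - qc1 p * qc3 q + qc2 p * qc0 q + qc3 p * qc1 q)
     (qc0 p * qc3 q + qc1 p * qc2 q - qc2 p * qc1 q + qc3 p * qc0 q)"

definition qcnj :: "qpoly \<Rightarrow> qpoly" where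
  "qcnj p = QP (qc0 p) (- qc1 p) (- qc2 p) (- qc3 p)"

definition qscale :: "real poly \<Rightarrow> qpoly \<Rightarrow> qpoly" where
  "qscale h p = QP (h * qc0 p) (h * qc1 p) (h * qc2 p) (h * qc3 p)"

definition qk :: qpoly where "qk = QP 0 0 0 1"

definition qvectorial :: "qpoly \<Rightarrow> bool" where
  "qvectorial p \<longleftrightarrow> qc0 p = 0"

definition rgcd :: "qpoly \<Rightarrow> real poly" where
  "rgcd p = gcd (gcd (qc0 p) (qc1 p)) (gcd (qc2 p) (qc3 p))"

text \<open>Dual quaternion polynomial C = P + eps D represented by the pair (P, D).
Motion polynomial: P \<noteq> 0 and P conj(D) + D conj(P) = 0.\<close>
definition motion_poly :: "qpoly \<Rightarrow> qpoly \<Rightarrow> bool" where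
  "motion_poly P D \<longleftrightarrow> P \<noteq> qzero \<and> qadd (qmult P (qcnj D)) (qmult D (qcnj P)) = qzero"

definition line_poly :: "qpoly \<Rightarrow> qpoly \<Rightarrow> bool" where
  "line_poly Lp Ld \<longleftrightarrow> qvectorial Lp \<and> qvectorial Ld \<and>
     qadd (qmult Lp (qcnj Ld)) (qmult Ld (qcnj Lp)) = qzero \<and> Lp \<noteq> qzero"

definition three_eqs :: "qpoly \<Rightarrow> qpoly \<Rightarrow> real poly \<Rightarrow> qpoly \<Rightarrow> qpoly \<Rightarrow> bool" where
  "three_eqs P D h Lp Ld \<longleftrightarrow>
     qmult (qmult P qk) (qcnj P) = qscale h Lp \<and>
     qadd (qneg (qmult (qmult P qk) (qcnj D))) (qneg (qmult (qmult D qk) (qcnj P))) = qscale h Ld \<and>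
     qadd (qmult P (qcnj D)) (qmult D (qcnj P)) = qzero"

end

theory Submission
  imports Defs
begin

text \<open>Split \<open>\<bbbH> = \<complex> \<oplus> \<bold>i\<complex>\<close> with \<open>\<complex> = \<real> + \<real>\<bold>k\<close>: then \<open>P = X + \<bold>i Y\<close> and
  \<open>D = Z + \<bold>i W\<close> with complex polynomials \<open>X, Y, Z, W\<close>, and the three equations become identities
  between these and their conjugates.  Over \<open>\<complex>\<close>, \<open>f\<close> is a constant times \<open>l\<close> or \<open>l l'\<close>, where
  \<open>l\<close> is a linear factor and \<open>l'\<close> its conjugate.  Let \<open>s\<close> be the multiplicity of \<open>f\<close> in \<open>h\<close>,
  and \<open>\<alpha>\<close>, \<open>\<alpha>'\<close> the orders of \<open>l\<close> in \<open>(X, Y)\<close> and in its conjugate.  The equations force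
  \<open>s \<le> \<alpha> + \<alpha>'\<close>, and the hypothesis on \<open>h / gcd (rgcd L\<^sub>p, h)\<close> forces \<open>\<alpha> + \<alpha>' + 2 \<le> 2 s\<close>.
  These bounds give a polynomial \<open>u\<close> of norm \<open>f\<^sup>2\<close> dividing \<open>X\<close> and \<open>Y\<close>.  A Bezout identity for
  the coprime part of \<open>(X, Y)\<close> yields a solution of the homogeneous dual equations whose
  subtraction makes \<open>Z\<close> and \<open>W\<close> divisible by \<open>u\<close> too.  Dividing \<open>P\<close> and the corrected \<open>D\<close> by \<open>u\<close>
  divides \<open>h\<close> by \<open>f\<^sup>2\<close>, so \<open>m = 1\<close>.\<close>

definition of_real_poly :: "real poly \<Rightarrow> complex poly" where
  "of_real_poly p = map_poly of_real p"

definition cnj_poly :: "complex poly \<Rightarrow> complex poly" where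
  "cnj_poly p = map_poly cnj p"

lemma coeff_of_real_poly [simp]: "coeff (of_real_poly p) n = of_real (coeff p n)"
  by (simp add: of_real_poly_def coeff_map_poly)

lemma coeff_cnj_poly [simp]: "coeff (cnj_poly p) n = cnj (coeff p n)"
  by (simp add: cnj_poly_def coeff_map_poly)

lemma of_real_poly_0 [simp]: "of_real_poly 0 = 0"
  and of_real_poly_1 [simp]: "of_real_poly 1 = 1"
  and of_real_poly_add [simp]: "of_real_poly (p + q) = of_real_poly p + of_real_poly q"
  and of_real_poly_diff [simp]: "of_real_poly (p - q) = of_real_poly p - of_real_poly q"
  and of_real_poly_minus [simp]: "of_real_poly (- p) = - of_real_poly p"
  and of_real_poly_mult [simp]: "of_real_poly (p * q) = of_real_poly p * of_real_poly q"
  and of_real_poly_eq_iff [simp]: "of_real_poly p = of_real_poly q \<longleftrightarrow> p = q"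
  by (simp_all add: poly_eq_iff coeff_mult coeff_1)

lemma of_real_poly_power [simp]: "of_real_poly (p ^ n) = of_real_poly p ^ n"
  by (induct n) simp_all

lemma of_real_poly_of_nat [simp]: "of_real_poly (of_nat n) = of_nat n"
  by (induct n) simp_all

lemma of_real_poly_numeral [simp]: "of_real_poly (numeral n) = numeral n"
  by (metis of_nat_numeral of_real_poly_of_nat)

lemma of_real_poly_eq_0_iff [simp]: "of_real_poly p = 0 \<longleftrightarrow> p = 0"
  using of_real_poly_eq_iff[of p 0] by simp

lemma degree_of_real_poly [simp]: "degree (of_real_poly p) = degree p"
  by (simp add: of_real_poly_def degree_map_poly)

lemma poly_of_real_poly [simp]: "poly (of_real_poly p) (of_real x) = of_real (poly p x)"
  unfolding of_real_poly_def by (induction p) (auto simp: map_poly_pCons)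

lemma of_real_poly_dvd_iff [simp]: "of_real_poly a dvd of_real_poly b \<longleftrightarrow> a dvd b"
proof
  assume dvd: "of_real_poly a dvd of_real_poly b"
  show "a dvd b"
  proof (cases "a = 0")
    case False
    have "of_real_poly b = of_real_poly a * of_real_poly (b div a) + of_real_poly (b mod a)"
      by (metis of_real_poly_add of_real_poly_mult div_mult_mod_eq mult.commute)
    with dvd have "of_real_poly a dvd of_real_poly (b mod a)"
      by (metis dvd_add_right_iff dvd_triv_left)
    moreover have "b mod a = 0 \<or> degree (b mod a) < degree a"
      using False by (rule degree_mod_less)
    ultimately have "b mod a = 0"
      by (metis of_real_poly_eq_0_iff degree_of_real_poly dvd_imp_degree_le leD)
    then show ?thesis by (simp add: mod_eq_0_iff_dvd)
  qed (use dvd in simp)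
qed (metis of_real_poly_mult dvdE dvdI)

lemma cnj_poly_0 [simp]: "cnj_poly 0 = 0"
  and cnj_poly_1 [simp]: "cnj_poly 1 = 1"
  and cnj_poly_add [simp]: "cnj_poly (p + q) = cnj_poly p + cnj_poly q"
  and cnj_poly_diff [simp]: "cnj_poly (p - q) = cnj_poly p - cnj_poly q"
  and cnj_poly_minus [simp]: "cnj_poly (- p) = - cnj_poly p"
  and cnj_poly_mult [simp]: "cnj_poly (p * q) = cnj_poly p * cnj_poly q"
  and cnj_poly_cnj_poly [simp]: "cnj_poly (cnj_poly p) = p"
  and cnj_poly_of_real_poly [simp]: "cnj_poly (of_real_poly r) = of_real_poly r"
  by (simp_all add: poly_eq_iff coeff_mult cnj_sum coeff_1 coeff_pCons split: nat.splits)

lemma cnj_poly_smult: "cnj_poly (smult c p) = smult (cnj c) (cnj_poly p)"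
  by (simp add: poly_eq_iff)

lemma cnj_poly_power [simp]: "cnj_poly (p ^ n) = cnj_poly p ^ n"
  by (induct n) simp_all

lemma cnj_poly_of_nat [simp]: "cnj_poly (of_nat n) = of_nat n"
  by (induct n) simp_all

lemma cnj_poly_numeral [simp]: "cnj_poly (numeral n) = numeral n"
  by (metis of_nat_numeral cnj_poly_of_nat)

lemma cnj_poly_dvd_iff [simp]: "cnj_poly a dvd cnj_poly b \<longleftrightarrow> a dvd b"
  by (metis cnj_poly_mult cnj_poly_cnj_poly dvdE dvdI)

lemma smult_half_double: "smult (1/2) (p + p) = (p :: complex poly)"
  by (simp only: smult_add_right flip: smult_add_left) simp

definition i_poly :: "complex poly" where
  "i_poly = [:\<i>:]"

lemma i_poly_squared: "i_poly * i_poly = -1"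
  by (simp add: i_poly_def poly_eq_iff coeff_pCons split: nat.splits)

lemma cnj_poly_i_poly [simp]: "cnj_poly i_poly = - i_poly"
  by (simp add: i_poly_def poly_eq_iff coeff_pCons split: nat.splits)

lemma dvd_double_cancel:
  fixes p q :: "complex poly"
  assumes "p dvd 2 * q"
  shows "p dvd q"
proof -
  have "2 * q = smult 2 q" by (simp add: numeral_poly)
  with assms show ?thesis using dvd_smult_iff[of 2 p q] by simp
qed

section \<open>Quaternion polynomials as pairs of complex polynomials\<close>

definition cpoly :: "real poly \<Rightarrow> real poly \<Rightarrow> complex poly" where
  "cpoly a b = of_real_poly a + i_poly * of_real_poly b"

lemma cpoly_eq_iff [simp]: "cpoly a b = cpoly c d \<longleftrightarrow> a = c \<and> b = d"
proof
  assume "cpoly a b = cpoly c d"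
  then have "coeff (cpoly a b) n = coeff (cpoly c d) n" for n
    by simp
  then have "coeff a n = coeff c n \<and> coeff b n = coeff d n" for n
    by (simp add: cpoly_def i_poly_def complex_eq_iff)
  then show "a = c \<and> b = d"
    by (simp add: poly_eq_iff)
qed simp

lemma cpoly_0 [simp]: "cpoly 0 0 = 0"
  by (simp add: cpoly_def)

lemma cpoly_mult_of_real_poly: "cpoly (h * a) (h * b) = of_real_poly h * cpoly a b"
  by (simp add: cpoly_def algebra_simps)

lemma cnj_poly_cpoly [simp]: "cnj_poly (cpoly a b) = cpoly a (- b)"
  by (simp add: cpoly_def)

text \<open>Identifying \<open>\<complex>\<close> with the subalgebra \<open>\<real> + \<real>\<bold>k\<close> of \<open>\<bbbH>\<close>, every quaternion
  polynomial is \<open>X + \<bold>i Y\<close> with \<open>X = p\<^sub>0 + p\<^sub>3\<bold>k\<close> and \<open>Y = p\<^sub>1 - p\<^sub>2\<bold>k\<close>.\<close>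

definition qfst :: "qpoly \<Rightarrow> complex poly" where
  "qfst P = cpoly (qc0 P) (qc3 P)"

definition qsnd :: "qpoly \<Rightarrow> complex poly" where
  "qsnd P = cpoly (qc1 P) (- qc2 P)"

definition qpair :: "complex poly \<Rightarrow> complex poly \<Rightarrow> qpoly" where
  "qpair X Y = QP (map_poly Re X) (map_poly Re Y) (- map_poly Im Y) (map_poly Im X)"

lemma qfst_qpair [simp]: "qfst (qpair X Y) = X"
  and qsnd_qpair [simp]: "qsnd (qpair X Y) = Y"
  by (simp_all add: qfst_def qsnd_def qpair_def cpoly_def i_poly_def poly_eq_iff coeff_map_poly complex_eq_iff)

lemma qpoly_eq_iff: "P = Q \<longleftrightarrow> qc0 P = qc0 Q \<and> qc1 P = qc1 Q \<and> qc2 P = qc2 Q \<and> qc3 P = qc3 Q"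
  by (cases P; cases Q) simp

lemma qzero_iff_qfst_qsnd: "P = qzero \<longleftrightarrow> qfst P = 0 \<and> qsnd P = 0"
  using cpoly_eq_iff[of "qc0 P" "qc3 P" 0 0] cpoly_eq_iff[of "qc1 P" "- qc2 P" 0 0]
  by (auto simp: qpoly_eq_iff qzero_def qfst_def qsnd_def)

definition herm :: "complex poly \<Rightarrow> complex poly \<Rightarrow> complex poly" where
  "herm A B = A * cnj_poly B + B * cnj_poly A"

definition herm_mixed ::
    "complex poly \<Rightarrow> complex poly \<Rightarrow> complex poly \<Rightarrow> complex poly \<Rightarrow> complex poly"
  where "herm_mixed X Y Z W = X * cnj_poly W + Z * cnj_poly Y"

lemma herm_commute: "herm A B = herm B A"
  by (simp add: herm_def)

lemma herm_diff_left: "herm (A - B) C = herm A C - herm B C"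
  by (simp add: herm_def algebra_simps)

lemma herm_linear_combination:
  "herm (a * X + b * Y) (a * Z + b * W) =
    a * cnj_poly a * herm X Z + a * cnj_poly b * herm_mixed X Y Z W
    + b * cnj_poly a * cnj_poly (herm_mixed X Y Z W) + b * cnj_poly b * herm Y W"
  unfolding herm_def herm_mixed_def by (simp add: algebra_simps)

lemma norm_components:
  fixes P :: qpoly
  defines "K \<equiv> qmult (qmult P qk) (qcnj P)"
  shows "qc0 K = 0"
    and "of_real_poly (qc3 K) = qfst P * cnj_poly (qfst P) - qsnd P * cnj_poly (qsnd P)"
    and "cpoly (- qc2 K) (qc1 K) = 2 * (qfst P * cnj_poly (qsnd P))"
  unfolding K_def qfst_def qsnd_def cpoly_def qmult_def qk_def qcnj_def using i_poly_squared
  by simp_all algebra+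

lemma dual_components:
  fixes P D :: qpoly
  defines "E \<equiv> qadd (qneg (qmult (qmult P qk) (qcnj D))) (qneg (qmult (qmult D qk) (qcnj P)))"
  shows "qc0 E = 0"
    and "of_real_poly (qc3 E) = herm (qsnd P) (qsnd D) - herm (qfst P) (qfst D)"
    and "cpoly (qc2 E) (- qc1 E) = 2 * herm_mixed (qfst P) (qsnd P) (qfst D) (qsnd D)"
  unfolding E_def herm_def herm_mixed_def qfst_def qsnd_def cpoly_def qadd_def qneg_def qmult_def qk_def
    qcnj_def
  using i_poly_squared by simp_all algebra+

lemma study_components:
  fixes P D :: qpoly
  defines "S \<equiv> qadd (qmult P (qcnj D)) (qmult D (qcnj P))"
  shows "of_real_poly (qc0 S) = herm (qfst P) (qfst D) + herm (qsnd P) (qsnd D)"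
    and "qc1 S = 0" and "qc2 S = 0" and "qc3 S = 0"
  unfolding S_def herm_def qfst_def qsnd_def cpoly_def qadd_def qmult_def qcnj_def
  using i_poly_squared by simp_all algebra

definition complex_eqs ::
    "complex poly \<Rightarrow> complex poly \<Rightarrow> complex poly \<Rightarrow> complex poly \<Rightarrow> real poly \<Rightarrow> qpoly \<Rightarrow> qpoly \<Rightarrow> bool"
  where "complex_eqs X Y Z W h Lp Ld \<longleftrightarrow>
    X * cnj_poly X - Y * cnj_poly Y = of_real_poly (h * qc3 Lp) \<and>
    2 * (X * cnj_poly Y) = cpoly (- (h * qc2 Lp)) (h * qc1 Lp) \<and>
    herm Y W - herm X Z = of_real_poly (h * qc3 Ld) \<and>
    2 * herm_mixed X Y Z W = cpoly (h * qc2 Ld) (- (h * qc1 Ld)) \<and>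
    herm X Z + herm Y W = 0"

lemma three_eqs_iff_complex_eqs:
  assumes "qvectorial Lp" "qvectorial Ld"
  shows "three_eqs P D h Lp Ld \<longleftrightarrow> complex_eqs (qfst P) (qsnd P) (qfst D) (qsnd D) h Lp Ld"
  unfolding three_eqs_def complex_eqs_def norm_components(2,3)[of P, symmetric]
    dual_components(2,3)[of P D, symmetric] study_components(1)[of P D, symmetric]
  using assms norm_components(1)[of P] dual_components(1)[of P D] study_components(2-4)[of P D]
  by (auto simp: qpoly_eq_iff qscale_def qzero_def qvectorial_def simp del: of_real_poly_mult)

section \<open>Dividing a solution by a norm\<close>

text \<open>\<open>(G\<^sub>1, G\<^sub>2)\<close> solves the homogeneous dual equations, so the dual part may be changed by it
  before dividing by \<open>u\<close>.\<close>

definition reduces_by ::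
    "complex poly \<Rightarrow> complex poly \<Rightarrow> complex poly \<Rightarrow> complex poly \<Rightarrow> complex poly \<Rightarrow> bool"
  where "reduces_by u X Y Z W \<longleftrightarrow> u dvd X \<and> u dvd Y \<and>
    (\<exists>G1 G2. herm G1 X = 0 \<and> herm_mixed X Y G1 G2 = 0 \<and> herm G2 Y = 0 \<and>
      u dvd Z - G1 \<and> u dvd W - G2)"

lemma complex_eqs_divide:
  assumes eqs: "complex_eqs X Y Z W h Lp Ld" and red: "reduces_by u X Y Z W"
    and norm_u: "u * cnj_poly u = of_real_poly F" and "F dvd h" and "F \<noteq> 0"
  shows "\<exists>X' Y' Z' W'. X = u * X' \<and> Y = u * Y' \<and> complex_eqs X' Y' Z' W' (h div F) Lp Ld"
proof -
  obtain X' Y' G1 G2 Z' W' where X: "X = u * X'" and Y: "Y = u * Y'"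
    and G: "herm G1 X = 0" "herm_mixed X Y G1 G2 = 0" "herm G2 Y = 0"
    and Z: "Z = G1 + u * Z'" and W: "W = G2 + u * W'"
    using red unfolding reduces_by_def by (metis dvdE diff_eq_eq add.commute)
  define h' where "h' = h div F"
  have h: "h = F * h'"
    using \<open>F dvd h\<close> by (simp add: h'_def)
  have scale: "X * cnj_poly X - Y * cnj_poly Y = of_real_poly F * (X' * cnj_poly X' - Y' * cnj_poly Y')"
    "X * cnj_poly Y = of_real_poly F * (X' * cnj_poly Y')"
    "herm X Z = of_real_poly F * herm X' Z'" "herm Y W = of_real_poly F * herm Y' W'"
    "herm_mixed X Y Z W = of_real_poly F * herm_mixed X' Y' Z' W'"
    using G norm_u unfolding X Y Z W herm_def herm_mixed_def by (simp; algebra)+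
  have "complex_eqs X Y Z W (F * h') Lp Ld \<longleftrightarrow> complex_eqs X' Y' Z' W' h' Lp Ld"
    unfolding complex_eqs_def scale using \<open>F \<noteq> 0\<close>
    by (simp add: mult.assoc cpoly_mult_of_real_poly flip: mult_minus_right right_diff_distrib distrib_left)
  with eqs h have "complex_eqs X' Y' Z' W' h' Lp Ld"
    by simp
  with X Y show ?thesis
    unfolding h'_def by blast
qed

lemma reduced_solution_exists:
  assumes eqs: "complex_eqs (qfst P) (qsnd P) (qfst D) (qsnd D) h Lp Ld"
    and "qvectorial Lp" "qvectorial Ld" "P \<noteq> qzero"
    and "reduces_by u (qfst P) (qsnd P) (qfst D) (qsnd D)" "u * cnj_poly u = of_real_poly F"
    and "F dvd h" "F \<noteq> 0"
  shows "\<exists>P' D'. motion_poly P' D' \<and> three_eqs P' D' (h div F) Lp Ld"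
proof -
  obtain X' Y' Z' W' where P: "qfst P = u * X'" "qsnd P = u * Y'"
    and eqs': "complex_eqs X' Y' Z' W' (h div F) Lp Ld"
    using complex_eqs_divide[OF eqs] assms(5-) by blast
  have three: "three_eqs (qpair X' Y') (qpair Z' W') (h div F) Lp Ld"
    using eqs' three_eqs_iff_complex_eqs[OF assms(2,3)] by simp
  have "qpair X' Y' \<noteq> qzero"
    using P \<open>P \<noteq> qzero\<close> by (auto simp: qzero_iff_qfst_qsnd)
  with three show ?thesis
    unfolding motion_poly_def three_eqs_def by blast
qed

lemma reduces_by_smult: "c \<noteq> 0 \<Longrightarrow> reduces_by u X Y Z W \<Longrightarrow> reduces_by (smult c u) X Y Z W"
  unfolding reduces_by_def by (simp add: smult_dvd_iff)

lemma reduction_rescale: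
  assumes "reduces_by u X Y Z W" "u * cnj_poly u = L ^ 2"
    and "of_real_poly f = smult (of_real c) L" "c \<noteq> 0"
  shows "\<exists>u'. u' * cnj_poly u' = of_real_poly (f ^ 2) \<and> reduces_by u' X Y Z W"
proof (intro exI conjI)
  show "smult (of_real c) u * cnj_poly (smult (of_real c) u) = of_real_poly (f ^ 2)"
    using assms(2,3) by (simp add: cnj_poly_smult power2_eq_square)
  show "reduces_by (smult (of_real c) u) X Y Z W"
    using assms(1,4) by (simp add: reduces_by_smult)
qed

section \<open>Reductions from a Bezout identity\<close>

definition dual_dvd ::
    "complex poly \<Rightarrow> complex poly \<Rightarrow> complex poly \<Rightarrow> complex poly \<Rightarrow> complex poly \<Rightarrow> bool"
  where "dual_dvd F X Y Z W \<longleftrightarrow> F dvd herm X Z \<and> F dvd herm_mixed X Y Z W \<and> F dvd herm Y W"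

lemma dual_dvd_trans: "G dvd F \<Longrightarrow> dual_dvd F X Y Z W \<Longrightarrow> dual_dvd G X Y Z W"
  unfolding dual_dvd_def by (meson dvd_trans)

lemma complex_eqs_dual_dvd:
  assumes "complex_eqs X Y Z W h Lp Ld"
  shows "dual_dvd (of_real_poly h) X Y Z W"
proof -
  from assms have dual: "herm Y W - herm X Z = of_real_poly (h * qc3 Ld)"
    and herm_mixed: "2 * herm_mixed X Y Z W = cpoly (h * qc2 Ld) (- (h * qc1 Ld))"
    and study: "herm Y W = - herm X Z"
    unfolding complex_eqs_def by (auto simp: add_eq_0_iff)
  have "2 * herm X Z = - (herm Y W - herm X Z)"
    using study by simp
  also have "\<dots> = of_real_poly h * - of_real_poly (qc3 Ld)"
    using dual by simp
  finally have "of_real_poly h dvd herm X Z"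
    by (intro dvd_double_cancel[of _ "herm X Z"]) (simp only: dvd_triv_left)
  moreover have "of_real_poly h dvd herm_mixed X Y Z W"
    by (rule dvd_double_cancel)
      (simp add: herm_mixed cpoly_mult_of_real_poly flip: mult_minus_right)
  ultimately show ?thesis
    unfolding dual_dvd_def using study by simp
qed

lemma bezout_coprime_modulus:
  fixes X Y F :: "'a :: euclidean_ring_gcd"
  assumes "coprime F (gcd X Y)"
  obtains a b e where "a * X + b * Y + e = 1" and "F dvd e"
proof -
  obtain p q where pq: "p * F + q * gcd X Y = 1"
    using bezout_coefficients_fst_snd[of F "gcd X Y"] assms by auto
  obtain p' q' where "p' * X + q' * Y = gcd X Y"
    using bezout_coefficients_fst_snd[of X Y] by blast
  with pq have "(q * p') * X + (q * q') * Y + p * F = 1"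
    by (metis (no_types, lifting) add.commute distrib_left mult.assoc)
  then show ?thesis
    using that[of "q * p'" "q * q'" "p * F"] by simp
qed

text \<open>With \<open>a X\<^sub>0 + b Y\<^sub>0 \<equiv> 1\<close> modulo \<open>F\<close>, the multiplier \<open>\<mu> = a Z + b W\<close> satisfies
  \<open>Z \<equiv> \<mu> X\<^sub>0\<close> and \<open>W \<equiv> \<mu> Y\<^sub>0\<close> up to multiples of the determinant \<open>X\<^sub>0 W - Y\<^sub>0 Z\<close>.\<close>

lemma dual_dvd_bezout:
  fixes g X0 Y0 Z W a b e F :: "complex poly"
  assumes bez: "a * X0 + b * Y0 + e = 1" and "F dvd e" and "cnj_poly F = F"
    and dual: "dual_dvd F (g * X0) (g * Y0) Z W"
  shows "F dvd g * cnj_poly (X0 * W - Y0 * Z)"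
    and "F dvd herm (a * Z + b * W) g"
proof -
  let ?d = "X0 * W - Y0 * Z"
  let ?A = "herm (g * X0) Z" and ?B = "herm_mixed (g * X0) (g * Y0) Z W" and ?C = "herm (g * Y0) W"
  have A: "F dvd ?A" and B: "F dvd ?B" and B': "F dvd cnj_poly ?B" and C: "F dvd ?C"
    using dual \<open>cnj_poly F = F\<close> cnj_poly_dvd_iff[of F ?B] unfolding dual_dvd_def by auto
  have e': "F dvd cnj_poly e"
    using \<open>F dvd e\<close> \<open>cnj_poly F = F\<close> cnj_poly_dvd_iff[of F e] by simp
  have "g * X0 * cnj_poly ?d = cnj_poly X0 * ?B - cnj_poly Y0 * ?A"
    "g * Y0 * cnj_poly ?d = cnj_poly X0 * ?C - cnj_poly Y0 * cnj_poly ?B"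
    unfolding herm_def herm_mixed_def by (simp add: algebra_simps)+
  then have "F dvd g * X0 * cnj_poly ?d" "F dvd g * Y0 * cnj_poly ?d"
    using A B B' C by (simp_all add: dvd_diff)
  then have "F dvd a * (g * X0 * cnj_poly ?d) + b * (g * Y0 * cnj_poly ?d) + e * (g * cnj_poly ?d)"
    using \<open>F dvd e\<close> by (simp add: dvd_add)
  also have "a * (g * X0 * cnj_poly ?d) + b * (g * Y0 * cnj_poly ?d) + e * (g * cnj_poly ?d)
      = (a * X0 + b * Y0 + e) * (g * cnj_poly ?d)"
    by (simp add: algebra_simps)
  finally show "F dvd g * cnj_poly ?d"
    by (simp add: bez)
  let ?\<mu> = "a * Z + b * W"
  have "F dvd herm (a * (g * X0) + b * (g * Y0)) ?\<mu>"
    unfolding herm_linear_combination using A B B' C by (intro dvd_add dvd_mult)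
  moreover have "F dvd herm (g * e) ?\<mu>"
    unfolding herm_def using \<open>F dvd e\<close> e' by simp
  ultimately have "F dvd herm (a * (g * X0) + b * (g * Y0)) ?\<mu> + herm (g * e) ?\<mu>"
    by (rule dvd_add)
  also have "a * (g * X0) + b * (g * Y0) = g * (a * X0 + b * Y0 + e) - g * e"
    by (simp add: algebra_simps)
  then have "herm (a * (g * X0) + b * (g * Y0)) ?\<mu> + herm (g * e) ?\<mu> = herm ?\<mu> g"
    by (simp add: bez herm_diff_left herm_commute)
  finally show "F dvd herm ?\<mu> g" .
qed

lemma hermitian_halve:
  fixes g Q \<mu> :: "complex poly"
  assumes "cnj_poly g * Q dvd herm \<mu> g"
  obtains \<sigma> where "Q dvd \<sigma>" and "herm \<sigma> g = herm \<mu> g"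
proof -
  obtain k where k: "herm \<mu> g = cnj_poly g * Q * k"
    using assms by (elim dvdE)
  define \<sigma> where "\<sigma> = smult (1/2) (Q * k)"
  have "cnj_poly (herm \<mu> g) = herm \<mu> g"
    by (simp add: herm_def)
  with k have k': "herm \<mu> g = g * cnj_poly (Q * k)"
    by (simp add: algebra_simps)
  have "herm \<sigma> g = smult (1/2) (cnj_poly g * Q * k + g * cnj_poly (Q * k))"
    unfolding \<sigma>_def herm_def by (simp add: cnj_poly_smult smult_add_right algebra_simps)
  also have "\<dots> = herm \<mu> g"
    unfolding k[symmetric] k'[symmetric] by (rule smult_half_double)
  finally have "herm \<sigma> g = herm \<mu> g" .
  moreover have "Q dvd \<sigma>"
    unfolding \<sigma>_def by (simp add: dvd_smult)
  ultimately show ?thesis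
    using that by blast
qed

text \<open>The correction \<open>(G\<^sub>1, G\<^sub>2) = (\<mu> - \<sigma>) (X\<^sub>0, Y\<^sub>0)\<close> solves the homogeneous dual equations
  exactly because \<open>\<sigma>\<close> and \<open>\<mu>\<close> have the same hermitian product with \<open>g\<close>.\<close>

lemma reduces_by_bezoutI:
  fixes g u X0 Y0 Z W a b e \<sigma> :: "complex poly"
  assumes bez: "a * X0 + b * Y0 + e = 1"
    and "u dvd e" "u dvd X0 * W - Y0 * Z" "u dvd g" "u dvd \<sigma>"
    and herm_eq: "herm \<sigma> g = herm (a * Z + b * W) g"
  shows "reduces_by u (g * X0) (g * Y0) Z W"
proof -
  define \<mu> where "\<mu> = a * Z + b * W"
  define G1 where "G1 = (\<mu> - \<sigma>) * X0"
  define G2 where "G2 = (\<mu> - \<sigma>) * Y0"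
  have "herm (\<mu> - \<sigma>) g = 0"
    using herm_eq by (simp add: \<mu>_def herm_diff_left)
  moreover have "herm G1 (g * X0) = X0 * cnj_poly X0 * herm (\<mu> - \<sigma>) g"
    "herm_mixed (g * X0) (g * Y0) G1 G2 = X0 * cnj_poly Y0 * herm (\<mu> - \<sigma>) g"
    "herm G2 (g * Y0) = Y0 * cnj_poly Y0 * herm (\<mu> - \<sigma>) g"
    unfolding G1_def G2_def herm_def herm_mixed_def by (simp_all add: algebra_simps)
  ultimately have hom: "herm G1 (g * X0) = 0" "herm_mixed (g * X0) (g * Y0) G1 G2 = 0" "herm G2 (g * Y0) = 0"
    by simp_all
  have "Z - G1 = e * Z - b * (X0 * W - Y0 * Z) + \<sigma> * X0"
    "W - G2 = e * W + a * (X0 * W - Y0 * Z) + \<sigma> * Y0"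
    using bez unfolding G1_def G2_def \<mu>_def by algebra+
  then have "u dvd Z - G1" "u dvd W - G2"
    using assms(2-5) by (simp_all add: dvd_add dvd_diff)
  moreover have "u dvd g * X0" "u dvd g * Y0"
    using \<open>u dvd g\<close> by simp_all
  ultimately show ?thesis
    unfolding reduces_by_def using hom by blast
qed

definition linear_factor :: "complex \<Rightarrow> complex poly" where
  "linear_factor z = [:- z, 1:]"

lemma linear_factor_nonzero [simp]: "linear_factor z \<noteq> 0"
  by (simp add: linear_factor_def)

lemma cnj_poly_linear_factor [simp]: "cnj_poly (linear_factor z) = linear_factor (cnj z)"
  by (simp add: linear_factor_def poly_eq_iff coeff_pCons split: nat.splits)

lemma linear_factor_dvd_iff: "linear_factor z dvd p \<longleftrightarrow> poly p z = 0"
  by (simp add: linear_factor_def poly_eq_0_iff_dvd)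

lemma prime_elem_linear_factor: "prime_elem (linear_factor z)"
  unfolding linear_factor_def by (rule prime_elem_linear_field_poly) simp

lemma linear_factor_dvd_power_iff: "linear_factor z dvd linear_factor w ^ n \<longleftrightarrow> z = w \<and> n > 0"
  unfolding linear_factor_dvd_iff by (auto simp: linear_factor_def)

lemma coprime_linear_factor_powers:
  assumes "z \<noteq> w"
  shows "coprime (linear_factor z ^ m) (linear_factor w ^ n)"
proof -
  have "\<not> linear_factor z dvd linear_factor w"
    using assms linear_factor_dvd_power_iff[of z w 1] by simp
  then have "coprime (linear_factor z) (linear_factor w)"
    by (rule prime_elem_imp_coprime[OF prime_elem_linear_factor])
  then show ?thesis
    by simp
qed

lemma power_dvd_mult_cancel:
  fixes l q :: "'a :: idom"
  assumes "l \<noteq> 0" "a \<le> n" "l ^ n dvd l ^ a * q"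
  shows "l ^ (n - a) dvd q"
proof -
  have "l ^ a * l ^ (n - a) dvd l ^ a * q"
    using assms(2,3) by (simp flip: power_add)
  then show ?thesis
    using assms(1) by simp
qed

lemma linear_factor_power_dvd_cancel:
  assumes "z \<noteq> w" "a \<le> n"
    and "linear_factor z ^ n dvd linear_factor z ^ a * (linear_factor w ^ b * q)"
  shows "linear_factor z ^ (n - a) dvd q"
proof -
  have "coprime (linear_factor z ^ (n - a)) (linear_factor w ^ b)"
    using assms(1) by (rule coprime_linear_factor_powers)
  then show ?thesis
    using power_dvd_mult_cancel[OF linear_factor_nonzero assms(2,3)] coprime_dvd_mult_right_iff
    by blast
qed

lemma coprime_power_gcd:
  fixes l X Y :: "'a :: factorial_ring_gcd"
  assumes "prime_elem l" "\<not> (l dvd X \<and> l dvd Y)"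
  shows "coprime (l ^ n) (gcd X Y)"
proof -
  have "\<not> l dvd gcd X Y"
    using assms(2) by simp
  then show ?thesis
    using prime_elem_imp_coprime[OF assms(1)] by simp
qed

lemma not_common_dvd_mult:
  assumes "prime_elem l" "\<not> l dvd m" "\<not> (l dvd X \<and> l dvd Y)"
  shows "\<not> (l dvd m * X \<and> l dvd m * Y)"
  using assms by (simp add: prime_elem_dvd_mult_iff)

lemma max_common_power:
  fixes l X Y :: "complex poly"
  assumes "X \<noteq> 0 \<or> Y \<noteq> 0" and "\<not> is_unit l"
  obtains \<alpha> X1 Y1 where "X = l ^ \<alpha> * X1" "Y = l ^ \<alpha> * Y1" "\<not> (l dvd X1 \<and> l dvd Y1)"
proof -
  define \<alpha> where "\<alpha> = multiplicity l (gcd X Y)"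
  have "gcd X Y \<noteq> 0"
    using assms(1) by simp
  have "l ^ \<alpha> dvd X" "l ^ \<alpha> dvd Y"
    using multiplicity_dvd[of l "gcd X Y"] unfolding \<alpha>_def by (meson dvd_trans gcd_dvd1 gcd_dvd2)+
  then obtain X1 Y1 where X: "X = l ^ \<alpha> * X1" "Y = l ^ \<alpha> * Y1"
    by (elim dvdE)
  moreover have "\<not> (l dvd X1 \<and> l dvd Y1)"
  proof
    assume "l dvd X1 \<and> l dvd Y1"
    then have "l ^ \<alpha> * l dvd X" "l ^ \<alpha> * l dvd Y"
      unfolding X by (simp_all add: mult_dvd_mono)
    then have "l ^ Suc \<alpha> dvd gcd X Y"
      by (metis power_Suc2 gcd_greatest)
    then have "Suc \<alpha> \<le> multiplicity l (gcd X Y)"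
      using power_dvd_iff_le_multiplicity[OF \<open>gcd X Y \<noteq> 0\<close> assms(2)] by blast
    then show False
      by (simp add: \<alpha>_def)
  qed
  ultimately show ?thesis
    using that by blast
qed

lemma max_common_powers_conjugate:
  fixes z :: complex and X Y :: "complex poly"
  defines "l \<equiv> linear_factor z" and "l' \<equiv> linear_factor (cnj z)"
  assumes "X \<noteq> 0 \<or> Y \<noteq> 0"
  obtains \<alpha> \<alpha>' X0 Y0 where "X = l ^ \<alpha> * l' ^ \<alpha>' * X0" "Y = l ^ \<alpha> * l' ^ \<alpha>' * Y0"
    and "\<not> (l dvd X0 \<and> l dvd Y0)" "\<not> (l' dvd X0 \<and> l' dvd Y0)"
proof -
  have not_unit: "\<not> is_unit l" "\<not> is_unit l'"
    by (simp_all add: l_def l'_def linear_factor_def is_unit_iff_degree)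
  obtain \<alpha>' X1 Y1 where X1: "X = l' ^ \<alpha>' * X1" "Y = l' ^ \<alpha>' * Y1"
    and nd': "\<not> (l' dvd X1 \<and> l' dvd Y1)"
    using max_common_power[OF assms(3) not_unit(2)] by blast
  have "X1 \<noteq> 0 \<or> Y1 \<noteq> 0"
    using assms(3) X1 by auto
  then obtain \<alpha> X0 Y0 where X0: "X1 = l ^ \<alpha> * X0" "Y1 = l ^ \<alpha> * Y0"
    and "\<not> (l dvd X0 \<and> l dvd Y0)"
    using max_common_power[OF _ not_unit(1)] by blast
  moreover have "\<not> (l' dvd X0 \<and> l' dvd Y0)"
    using nd' unfolding X0 by auto
  moreover have "X = l ^ \<alpha> * l' ^ \<alpha>' * X0" "Y = l ^ \<alpha> * l' ^ \<alpha>' * Y0"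
    unfolding X1 X0 by (simp_all add: mult_ac)
  ultimately show ?thesis
    using that by blast
qed

section \<open>Reduction at a real root and at a pair of conjugate roots\<close>

lemma reduces_by_real_linear_factor:
  fixes z :: complex and X0 Y0 Z W :: "complex poly"
  defines "l \<equiv> linear_factor z"
  assumes "cnj z = z" and nd: "\<not> (l dvd X0 \<and> l dvd Y0)"
    and dual: "dual_dvd (l ^ s) (l ^ \<alpha> * X0) (l ^ \<alpha> * Y0) Z W"
    and "s \<le> 2 * \<alpha>" and "\<alpha> < s"
  shows "reduces_by l (l ^ \<alpha> * X0) (l ^ \<alpha> * Y0) Z W"
proof -
  let ?d = "X0 * W - Y0 * Z"
  have cl: "cnj_poly l = l"
    using \<open>cnj z = z\<close> by (simp add: l_def)
  obtain a b e where bez: "a * X0 + b * Y0 + e = 1" and "l ^ s dvd e"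
    using bezout_coprime_modulus coprime_power_gcd[OF _ nd] prime_elem_linear_factor
    unfolding l_def by metis
  have D: "l ^ s dvd l ^ \<alpha> * cnj_poly ?d" "l ^ s dvd herm (a * Z + b * W) (l ^ \<alpha>)"
    using dual_dvd_bezout[OF bez \<open>l ^ s dvd e\<close> _ dual] cl by simp_all
  have "l ^ (s - \<alpha>) dvd cnj_poly ?d"
    using power_dvd_mult_cancel[OF _ _ D(1)] \<open>\<alpha> < s\<close> by (simp add: l_def)
  then have "l ^ (s - \<alpha>) dvd ?d"
    using cnj_poly_dvd_iff[of "l ^ (s - \<alpha>)" "cnj_poly ?d"] cl by simp
  moreover have l_dvd_power: "l dvd l ^ n" if "n > 0" for n
    using that by (simp add: dvd_power)
  ultimately have "l dvd ?d"
    using \<open>\<alpha> < s\<close> by (meson dvd_trans zero_less_diff)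
  have "cnj_poly (l ^ \<alpha>) * l ^ (s - \<alpha>) = l ^ s"
    using cl \<open>\<alpha> < s\<close> by (simp flip: power_add)
  with D(2) obtain \<sigma> where "l ^ (s - \<alpha>) dvd \<sigma>" and herm: "herm \<sigma> (l ^ \<alpha>) = herm (a * Z + b * W) (l ^ \<alpha>)"
    using hermitian_halve by metis
  then have "l dvd \<sigma>"
    using l_dvd_power[of "s - \<alpha>"] \<open>\<alpha> < s\<close> by (meson dvd_trans zero_less_diff)
  have "l dvd e"
    using l_dvd_power[of s] \<open>l ^ s dvd e\<close> \<open>\<alpha> < s\<close> by (auto intro: dvd_trans)
  have "l dvd l ^ \<alpha>"
    using l_dvd_power[of \<alpha>] \<open>\<alpha> < s\<close> \<open>s \<le> 2 * \<alpha>\<close> by simp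
  show ?thesis
    by (rule reduces_by_bezoutI[OF bez \<open>l dvd e\<close> \<open>l dvd ?d\<close> \<open>l dvd l ^ \<alpha>\<close> \<open>l dvd \<sigma>\<close> herm])
qed

lemma conjugate_factor_power_dvd:
  fixes z :: complex and d :: "complex poly" and \<alpha> \<alpha>' s :: nat
  defines "l \<equiv> linear_factor z" and "l' \<equiv> linear_factor (cnj z)"
  assumes "z \<noteq> cnj z" "\<alpha> \<le> s" "(l * l') ^ s dvd l ^ \<alpha> * l' ^ \<alpha>' * cnj_poly d"
  shows "l' ^ (s - \<alpha>) dvd d"
proof -
  have "l ^ s dvd l ^ \<alpha> * (l' ^ \<alpha>' * cnj_poly d)"
    using assms(5) by (metis dvd_mult_left mult.assoc power_mult_distrib)
  then have "l ^ (s - \<alpha>) dvd cnj_poly d"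
    unfolding l_def l'_def using linear_factor_power_dvd_cancel assms(3,4) by blast
  then show ?thesis
    using cnj_poly_dvd_iff[of "l ^ (s - \<alpha>)" "cnj_poly d"] by (simp add: l_def l'_def)
qed

text \<open>In the two lemmas below, \<open>a, b, e\<close> come from \<open>bezout_coprime_modulus\<close> for the coprime part
  \<open>(X\<^sub>0, Y\<^sub>0)\<close> and the divisibilities are those provided by \<open>dual_dvd_bezout\<close>.\<close>

lemma reduces_by_conjugate_factors_balanced:
  fixes z :: complex and X0 Y0 Z W a b e :: "complex poly" and \<alpha> \<alpha>' s :: nat
  defines "l \<equiv> linear_factor z" and "l' \<equiv> linear_factor (cnj z)"
    and "g \<equiv> linear_factor z ^ \<alpha> * linear_factor (cnj z) ^ \<alpha>'"
  assumes "z \<noteq> cnj z" and bez: "a * X0 + b * Y0 + e = 1" and "(l * l') ^ s dvd e"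
    and det: "(l * l') ^ s dvd g * cnj_poly (X0 * W - Y0 * Z)"
    and herm: "(l * l') ^ s dvd herm (a * Z + b * W) g"
    and "\<alpha> \<le> s" "\<alpha>' \<le> s" "s \<le> \<alpha> + \<alpha>'" "\<alpha> + \<alpha>' + 2 \<le> 2 * s"
  shows "\<exists>u. u * cnj_poly u = (l * l') ^ 2 \<and> reduces_by u (g * X0) (g * Y0) Z W"
proof -
  let ?d = "X0 * W - Y0 * Z"
  have cl: "cnj_poly l = l'" "cnj_poly l' = l"
    by (simp_all add: l_def l'_def)
  have g: "g = l ^ \<alpha> * l' ^ \<alpha>'" "g = l' ^ \<alpha>' * l ^ \<alpha>"
    by (simp_all add: g_def l_def l'_def mult.commute)
  have "l' ^ (s - \<alpha>) dvd ?d" "l ^ (s - \<alpha>') dvd ?d"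
    using conjugate_factor_power_dvd[of z \<alpha> s \<alpha>' ?d] conjugate_factor_power_dvd[of "cnj z" \<alpha>' s \<alpha> ?d]
      assms(4,9,10) det unfolding g l_def l'_def by (simp_all add: mult.commute)
  moreover have "coprime (l ^ (s - \<alpha>')) (l' ^ (s - \<alpha>))"
    unfolding l_def l'_def using \<open>z \<noteq> cnj z\<close> by (rule coprime_linear_factor_powers)
  ultimately have "l ^ (s - \<alpha>') * l' ^ (s - \<alpha>) dvd ?d" (is "?Q dvd _")
    using divides_mult by blast
  have "cnj_poly g * ?Q = (l * l') ^ s"
    using assms(9,10) by (simp add: g(1) cl power_mult_distrib algebra_simps flip: power_add)
  with herm obtain \<sigma> where "?Q dvd \<sigma>" and herm_eq: "herm \<sigma> g = herm (a * Z + b * W) g"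
    using hermitian_halve by metis
  text \<open>Split \<open>(l l')\<^sup>2\<close> as \<open>u * cnj_poly u\<close> with \<open>u = l\<^sup>x l'\<^sup>y\<close> dividing both \<open>g\<close> and \<open>?Q\<close>;
    this is where both order bounds are used.\<close>
  define x where "x = min 2 (s - \<alpha>')"
  define y where "y = 2 - x"
  define u where "u = l ^ x * l' ^ y"
  have "x \<le> \<alpha>" "y \<le> \<alpha>'" "x \<le> s - \<alpha>'" "y \<le> s - \<alpha>" "x + y = 2"
    unfolding x_def y_def using assms(9-12) by auto
  then have "u dvd g" "u dvd ?Q" "u dvd (l * l') ^ 2"
    unfolding u_def g(1) power_mult_distrib by (simp_all add: le_imp_power_dvd mult_dvd_mono)
  moreover have "2 \<le> s"
    using assms(11,12) by linarith
  then have "(l * l') ^ 2 dvd e"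
    using \<open>(l * l') ^ s dvd e\<close> by (meson dvd_trans le_imp_power_dvd)
  ultimately have "reduces_by u (g * X0) (g * Y0) Z W"
    using \<open>?Q dvd ?d\<close> \<open>?Q dvd \<sigma>\<close>
    by (intro reduces_by_bezoutI[OF bez _ _ _ _ herm_eq]) (meson dvd_trans)+
  moreover have "u * cnj_poly u = (l * l') ^ 2"
    using \<open>x + y = 2\<close> by (simp add: u_def cl power_mult_distrib algebra_simps flip: power_add)
  ultimately show ?thesis
    by blast
qed

lemma reduces_by_conjugate_factors_unbalanced:
  fixes z :: complex and X0 Y0 Z W a b e :: "complex poly" and \<alpha> \<alpha>' s :: nat
  defines "l \<equiv> linear_factor z" and "l' \<equiv> linear_factor (cnj z)"
    and "g \<equiv> linear_factor z ^ \<alpha> * linear_factor (cnj z) ^ \<alpha>'"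
  assumes "z \<noteq> cnj z" and bez: "a * X0 + b * Y0 + e = 1" and "(l * l') ^ s dvd e"
    and det: "(l * l') ^ s dvd g * cnj_poly (X0 * W - Y0 * Z)"
    and herm: "(l * l') ^ s dvd herm (a * Z + b * W) g"
    and "s < \<alpha>'" "\<alpha> + \<alpha>' + 2 \<le> 2 * s"
  shows "\<exists>u. u * cnj_poly u = (l * l') ^ 2 \<and> reduces_by u (g * X0) (g * Y0) Z W"
proof -
  let ?\<mu> = "a * Z + b * W"
  have cl: "cnj_poly l = l'" "cnj_poly l' = l"
    by (simp_all add: l_def l'_def)
  have g: "g = l ^ \<alpha> * l' ^ \<alpha>'"
    by (simp add: g_def l_def l'_def)
  have "\<alpha> \<le> s" "2 \<le> s - \<alpha>" "2 \<le> \<alpha>'"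
    using assms(9,10) by linarith+
  have "l' ^ s dvd g"
    using \<open>s < \<alpha>'\<close> unfolding g by (simp add: le_imp_power_dvd)
  moreover have "l' ^ s dvd herm ?\<mu> g"
    using herm by (metis dvd_mult_left mult.commute power_mult_distrib)
  ultimately have "l' ^ s dvd herm ?\<mu> g - g * cnj_poly ?\<mu>"
    by (simp add: dvd_diff)
  then have "l' ^ s dvd l' ^ \<alpha> * (l ^ \<alpha>' * ?\<mu>)"
    by (simp add: herm_def g cl algebra_simps)
  then have "l' ^ (s - \<alpha>) dvd ?\<mu>"
    unfolding l_def l'_def using linear_factor_power_dvd_cancel \<open>z \<noteq> cnj z\<close> \<open>\<alpha> \<le> s\<close>
    by (metis complex_cnj_cnj)
  text \<open>Here \<open>l'\<^sup>2\<close> divides \<open>\<mu>\<close> itself, so \<open>\<sigma> = \<mu>\<close> works and no correction is needed.\<close>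
  moreover have "l' ^ (s - \<alpha>) dvd X0 * W - Y0 * Z"
    using conjugate_factor_power_dvd[of z \<alpha> s \<alpha>'] \<open>z \<noteq> cnj z\<close> \<open>\<alpha> \<le> s\<close> det
    unfolding g l_def l'_def by blast
  moreover have "l' ^ 2 dvd l' ^ (s - \<alpha>)" "l' ^ 2 dvd g" "l' ^ 2 dvd e"
    using \<open>2 \<le> s - \<alpha>\<close> \<open>2 \<le> \<alpha>'\<close> \<open>(l * l') ^ s dvd e\<close> assms(10) unfolding g
    by (auto simp: le_imp_power_dvd power_mult_distrib intro: dvd_trans dvd_mult_right)
  ultimately have "reduces_by (l' ^ 2) (g * X0) (g * Y0) Z W"
    by (intro reduces_by_bezoutI[OF bez, where \<sigma> = ?\<mu>]) (meson dvd_trans)+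
  moreover have "l' ^ 2 * cnj_poly (l' ^ 2) = (l * l') ^ 2"
    by (simp add: cl power_mult_distrib mult.commute)
  ultimately show ?thesis
    by blast
qed

lemma reduces_by_conjugate_linear_factors:
  fixes z :: complex and X0 Y0 Z W :: "complex poly" and \<alpha> \<alpha>' s :: nat
  defines "l \<equiv> linear_factor z" and "l' \<equiv> linear_factor (cnj z)"
    and "g \<equiv> linear_factor z ^ \<alpha> * linear_factor (cnj z) ^ \<alpha>'"
  assumes "z \<noteq> cnj z" and nd: "\<not> (l dvd X0 \<and> l dvd Y0)" "\<not> (l' dvd X0 \<and> l' dvd Y0)"
    and dual: "dual_dvd ((l * l') ^ s) (g * X0) (g * Y0) Z W"
    and bounds: "s \<le> \<alpha> + \<alpha>'" "\<alpha> + \<alpha>' + 2 \<le> 2 * s"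
  shows "\<exists>u. u * cnj_poly u = (l * l') ^ 2 \<and> reduces_by u (g * X0) (g * Y0) Z W"
proof -
  have "coprime ((l * l') ^ s) (gcd X0 Y0)"
    using coprime_power_gcd[OF prime_elem_linear_factor nd(1)[unfolded l_def]]
      coprime_power_gcd[OF prime_elem_linear_factor nd(2)[unfolded l'_def]]
    by (simp add: power_mult_distrib l_def l'_def)
  then obtain a b e where bez: "a * X0 + b * Y0 + e = 1" and "(l * l') ^ s dvd e"
    by (rule bezout_coprime_modulus)
  moreover have "cnj_poly ((l * l') ^ s) = (l * l') ^ s"
    by (simp add: l_def l'_def mult.commute)
  ultimately have D: "(l * l') ^ s dvd g * cnj_poly (X0 * W - Y0 * Z)"
    "(l * l') ^ s dvd herm (a * Z + b * W) g"
    using dual_dvd_bezout[OF bez _ _ dual] by blast+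
  consider "\<alpha> \<le> s" "\<alpha>' \<le> s" | "s < \<alpha>'" | "s < \<alpha>"
    by linarith
  then show ?thesis
  proof cases
    case 1
    then show ?thesis
      using reduces_by_conjugate_factors_balanced[OF \<open>z \<noteq> cnj z\<close> bez] \<open>(l * l') ^ s dvd e\<close> D bounds
      unfolding l_def l'_def g_def by blast
  next
    case 2
    then show ?thesis
      using reduces_by_conjugate_factors_unbalanced[OF \<open>z \<noteq> cnj z\<close> bez] \<open>(l * l') ^ s dvd e\<close> D bounds
      unfolding l_def l'_def g_def by (simp add: mult.commute)
  next
    case 3
    then show ?thesis
      using reduces_by_conjugate_factors_unbalanced[where z = "cnj z" and \<alpha> = \<alpha>' and \<alpha>' = \<alpha>]
        \<open>z \<noteq> cnj z\<close> bez \<open>(l * l') ^ s dvd e\<close> D bounds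
      unfolding l_def l'_def g_def by (simp add: mult.commute add.commute)
  qed
qed

section \<open>Bounds on the orders of the roots\<close>

lemma complex_eqs_line_coordinates:
  assumes "complex_eqs X Y Z W h Lp Ld"
  shows "of_real_poly (h * qc1 Lp) = i_poly * (cnj_poly X * Y - X * cnj_poly Y)"
    and "of_real_poly (h * qc2 Lp) = - (X * cnj_poly Y + cnj_poly X * Y)"
    and "of_real_poly (h * qc3 Lp) = X * cnj_poly X - Y * cnj_poly Y"
proof -
  from assms have c: "2 * (X * cnj_poly Y) = cpoly (- (h * qc2 Lp)) (h * qc1 Lp)"
    and "of_real_poly (h * qc3 Lp) = X * cnj_poly X - Y * cnj_poly Y"
    unfolding complex_eqs_def by simp_all
  then show "of_real_poly (h * qc3 Lp) = X * cnj_poly X - Y * cnj_poly Y"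
    by simp
  have c': "2 * (cnj_poly X * Y) = cpoly (- (h * qc2 Lp)) (- (h * qc1 Lp))"
    using arg_cong[OF c, of cnj_poly] by (simp add: mult.commute)
  have "2 * of_real_poly (h * qc1 Lp) = 2 * (i_poly * (cnj_poly X * Y - X * cnj_poly Y))"
    using c c' i_poly_squared unfolding cpoly_def by simp algebra
  then show "of_real_poly (h * qc1 Lp) = i_poly * (cnj_poly X * Y - X * cnj_poly Y)"
    by simp
  have "2 * of_real_poly (h * qc2 Lp) = 2 * - (X * cnj_poly Y + cnj_poly X * Y)"
    using c c' unfolding cpoly_def by simp
  then show "of_real_poly (h * qc2 Lp) = - (X * cnj_poly Y + cnj_poly X * Y)"
    by (simp only: mult_cancel_left) simp
qed

lemma complex_eqs_norm_dvd:
  assumes "complex_eqs X Y Z W h Lp Ld"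
  shows "of_real_poly h dvd X * cnj_poly X - Y * cnj_poly Y"
    and "of_real_poly h dvd X * cnj_poly Y"
    and "of_real_poly h dvd cnj_poly X * Y"
proof -
  from assms have "X * cnj_poly X - Y * cnj_poly Y = of_real_poly h * of_real_poly (qc3 Lp)"
    and c: "2 * (X * cnj_poly Y) = of_real_poly h * cpoly (- qc2 Lp) (qc1 Lp)"
    unfolding complex_eqs_def by (simp_all add: cpoly_mult_of_real_poly flip: mult_minus_right)
  then show "of_real_poly h dvd X * cnj_poly X - Y * cnj_poly Y"
    by simp
  from c show "of_real_poly h dvd X * cnj_poly Y"
    by (intro dvd_double_cancel[of _ "X * cnj_poly Y"]) simp
  then have "cnj_poly (of_real_poly h) dvd cnj_poly (X * cnj_poly Y)"
    by (simp only: cnj_poly_dvd_iff)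
  then show "of_real_poly h dvd cnj_poly X * Y"
    by (simp add: mult.commute)
qed

lemma no_common_root_of_products:
  fixes X1 Y1 X2 Y2 :: "complex poly"
  assumes "\<not> (linear_factor z dvd X1 \<and> linear_factor z dvd Y1)"
    and "\<not> (linear_factor z dvd X2 \<and> linear_factor z dvd Y2)"
  shows "\<not> (linear_factor z dvd X1 * X2 - Y1 * Y2 \<and> linear_factor z dvd X1 * Y2 \<and>
    linear_factor z dvd X2 * Y1)"
  using assms by (auto simp: linear_factor_dvd_iff)

lemma power_dvd_mult_multiplicity:
  fixes f h q :: "'a :: factorial_ring_gcd"
  assumes "prime_elem f" "h \<noteq> 0" "multiplicity f h \<le> k" "f ^ k dvd h * q"
  shows "f ^ (k - multiplicity f h) dvd q"
proof -
  define s where "s = multiplicity f h"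
  define h1 where "h1 = h div f ^ s"
  have "\<not> is_unit f" "f \<noteq> 0"
    using assms(1) by (auto simp: prime_elem_def)
  have h: "h = f ^ s * h1"
    using multiplicity_dvd[of f h] by (simp add: h1_def s_def)
  have "\<not> f dvd h1"
    using multiplicity_decompose[OF \<open>h \<noteq> 0\<close> \<open>\<not> is_unit f\<close>] by (simp add: h1_def s_def)
  then have "coprime (f ^ (k - s)) h1"
    using prime_elem_imp_coprime[OF assms(1)] by simp
  have "f ^ s * f ^ (k - s) = f ^ k"
    using assms(3) by (simp add: s_def flip: power_add)
  moreover have "f ^ s * (h1 * q) = h * q"
    unfolding h by (simp only: mult.assoc)
  ultimately have "f ^ s * f ^ (k - s) dvd f ^ s * (h1 * q)"
    using assms(4) by (simp only:)
  then show ?thesis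
    using \<open>f \<noteq> 0\<close> \<open>coprime (f ^ (k - s)) h1\<close> by (simp add: s_def coprime_dvd_mult_right_iff)
qed

lemma multiplicity_bound:
  fixes f h :: "real poly" and Lp :: qpoly
  assumes "prime_elem f" "h \<noteq> 0" "qvectorial Lp" "multiplicity f h \<le> k"
    and "f ^ k dvd h * qc1 Lp" "f ^ k dvd h * qc2 Lp" "f ^ k dvd h * qc3 Lp"
    and "f ^ 2 dvd h div gcd (rgcd Lp) h"
  shows "k + 2 \<le> 2 * multiplicity f h"
proof -
  define s where "s = multiplicity f h"
  define j where "j = min (k - s) s"
  have "\<not> is_unit f"
    using assms(1) by (simp add: prime_elem_def)
  have "f ^ j dvd f ^ (k - s)" "f ^ j dvd f ^ s"
    unfolding j_def by (simp_all add: le_imp_power_dvd)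
  then have "f ^ j dvd rgcd Lp" "f ^ j dvd h"
    using power_dvd_mult_multiplicity[OF assms(1,2,4)] assms(3,5-7) multiplicity_dvd[of f h]
    unfolding rgcd_def qvectorial_def s_def by (auto intro: dvd_trans)
  then have "f ^ j dvd gcd (rgcd Lp) h"
    by simp
  then have "f ^ j * f ^ 2 dvd gcd (rgcd Lp) h * (h div gcd (rgcd Lp) h)"
    using assms(8) by (rule mult_dvd_mono)
  then have "f ^ (j + 2) dvd h"
    by (simp only: power_add dvd_mult_div_cancel gcd_dvd2)
  then have "j + 2 \<le> s"
    unfolding s_def using power_dvd_iff_le_multiplicity[OF \<open>h \<noteq> 0\<close> \<open>\<not> is_unit f\<close>] by blast
  then show ?thesis
    unfolding j_def s_def by linarith
qed

text \<open>The lower bound holds because, once \<open>l\<close> is removed as often as possible from \<open>(X, Y)\<close>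
  and from its conjugate, the products \<open>X\<^sub>1 X\<^sub>2 - Y\<^sub>1 Y\<^sub>2\<close>, \<open>X\<^sub>1 Y\<^sub>2\<close>, \<open>X\<^sub>2 Y\<^sub>1\<close> cannot all
  vanish at the root; the upper bound is where the hypothesis on \<open>h div gcd (rgcd L\<^sub>p) h\<close> enters.\<close>

lemma order_bounds:
  fixes f h :: "real poly" and z :: complex and X Y X1 Y1 X2 Y2 Z W :: "complex poly"
  defines "l \<equiv> linear_factor z"
  assumes val: "\<And>n p. f ^ n dvd p \<longleftrightarrow> l ^ n dvd of_real_poly p"
    and "prime_elem f" "h \<noteq> 0" "qvectorial Lp" and eqs: "complex_eqs X Y Z W h Lp Ld"
    and X: "X = l ^ \<alpha> * X1" "Y = l ^ \<alpha> * Y1" "\<not> (l dvd X1 \<and> l dvd Y1)"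
    and cX: "cnj_poly X = l ^ \<alpha>' * X2" "cnj_poly Y = l ^ \<alpha>' * Y2" "\<not> (l dvd X2 \<and> l dvd Y2)"
    and gcd: "f ^ 2 dvd h div gcd (rgcd Lp) h"
  shows "multiplicity f h \<le> \<alpha> + \<alpha>'" and "\<alpha> + \<alpha>' + 2 \<le> 2 * multiplicity f h"
proof -
  define k where "k = \<alpha> + \<alpha>'"
  have prods: "X * cnj_poly X - Y * cnj_poly Y = l ^ k * (X1 * X2 - Y1 * Y2)"
    "X * cnj_poly Y = l ^ k * (X1 * Y2)" "cnj_poly X * Y = l ^ k * (X2 * Y1)"
    unfolding k_def power_add by (simp_all only: cX(1,2)) (simp_all add: X(1,2) algebra_simps)
  have "l ^ k dvd of_real_poly (h * qc1 Lp)" "l ^ k dvd of_real_poly (h * qc2 Lp)"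
    "l ^ k dvd of_real_poly (h * qc3 Lp)"
    unfolding complex_eqs_line_coordinates[OF eqs] prods by (simp_all add: dvd_diff dvd_add)
  then have fk: "f ^ k dvd h * qc1 Lp" "f ^ k dvd h * qc2 Lp" "f ^ k dvd h * qc3 Lp"
    using val by blast+
  show "multiplicity f h \<le> \<alpha> + \<alpha>'"
  proof (rule ccontr)
    assume "\<not> multiplicity f h \<le> \<alpha> + \<alpha>'"
    then have "f ^ Suc k dvd h"
      unfolding k_def by (intro multiplicity_dvd') simp
    then have "l ^ Suc k dvd of_real_poly h"
      using val by blast
    then have "l ^ Suc k dvd l ^ k * (X1 * X2 - Y1 * Y2)" "l ^ Suc k dvd l ^ k * (X1 * Y2)"
      "l ^ Suc k dvd l ^ k * (X2 * Y1)"
      using complex_eqs_norm_dvd[OF eqs] unfolding prods by (meson dvd_trans)+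
    then have "l dvd X1 * X2 - Y1 * Y2" "l dvd X1 * Y2" "l dvd X2 * Y1"
      using power_dvd_mult_cancel[of l k "Suc k"] by (simp_all add: l_def)
    then show False
      using no_common_root_of_products X(3) cX(3) unfolding l_def by blast
  qed
  then show "\<alpha> + \<alpha>' + 2 \<le> 2 * multiplicity f h"
    using multiplicity_bound[OF \<open>prime_elem f\<close> \<open>h \<noteq> 0\<close> \<open>qvectorial Lp\<close> _ fk gcd]
    unfolding k_def by blast
qed

section \<open>Factoring \<open>f\<close> over \<open>\<complex>\<close>\<close>

lemma prime_elem_degree_1:
  fixes f :: "'a :: field poly"
  assumes "degree f = 1"
  shows "prime_elem f"
  using assms by (elim degree1_coeffs) (simp add: prime_elem_linear_field_poly)

lemma real_linear_factorization:
  fixes f :: "real poly"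
  assumes "degree f = 1"
  obtains x c where "c \<noteq> 0" and "of_real_poly f = smult (of_real c) (linear_factor (of_real x))"
proof -
  obtain c b where f: "f = [:b, c:]" and "c \<noteq> 0"
    using assms by (elim degree1_coeffs)
  then have "of_real_poly f = smult (of_real c) (linear_factor (of_real (- b / c)))"
    by (simp add: linear_factor_def poly_eq_iff coeff_pCons split: nat.splits)
  with \<open>c \<noteq> 0\<close> show ?thesis
    using that by blast
qed

lemma irreducible_poly_no_root:
  fixes f :: "'a :: field poly"
  assumes "irreducible f" "degree f \<ge> 2"
  shows "poly f x \<noteq> 0"
proof
  assume "poly f x = 0"
  then have "[:- x, 1:] dvd f"
    by (simp add: poly_eq_0_iff_dvd)
  then have "f dvd [:- x, 1:] \<or> is_unit [:- x, 1:]"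
    by (rule irreducibleD'[OF assms(1)])
  then show False
    using assms(2) dvd_imp_degree_le[of f "[:- x, 1:]"] by (auto simp: is_unit_iff_degree)
qed

lemma irreducible_quadratic_factorization:
  fixes f :: "real poly"
  assumes "degree f = 2" and "irreducible f"
  obtains z c where "z \<noteq> cnj z" and "c \<noteq> 0"
    and "of_real_poly f = smult (of_real c) (linear_factor z * linear_factor (cnj z))"
proof -
  let ?l = "linear_factor" and ?F = "of_real_poly f"
  have "f \<noteq> 0"
    using assms(1) by auto
  obtain z where root: "poly ?F z = 0"
    using fundamental_theorem_of_algebra[of ?F] assms(1) by (auto simp: constant_degree)
  have "z \<noteq> cnj z"
  proof
    assume "z = cnj z"
    then have "z = of_real (Re z)"
      by (simp add: complex_eq_iff)
    then show False
      using root poly_of_real_poly[of f "Re z"] irreducible_poly_no_root[OF assms(2)] assms(1)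
      by (metis of_real_eq_0_iff order_refl)
  qed
  have "cnj (poly ?F z) = poly ?F (cnj z)"
    using poly_cnj[of ?F z] cnj_poly_of_real_poly[of f] unfolding cnj_poly_def by (simp only:)
  then have "?l z dvd ?F" "?l (cnj z) dvd ?F" "coprime (?l z) (?l (cnj z))"
    using root coprime_linear_factor_powers[OF \<open>z \<noteq> cnj z\<close>, of 1 1]
    by (simp_all add: linear_factor_dvd_iff)
  then obtain q where q: "?F = ?l z * ?l (cnj z) * q"
    by (meson divides_mult dvdE)
  moreover have "degree (?l z * ?l (cnj z)) = 2"
    by (simp add: linear_factor_def degree_mult_eq)
  moreover have "q \<noteq> 0"
    using q \<open>f \<noteq> 0\<close> by auto
  ultimately have "degree q = 0"
    using assms(1) degree_mult_eq[of "?l z * ?l (cnj z)" q] degree_of_real_poly[of f]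
    unfolding q by simp
  then obtain k where "q = [:k:]"
    by (elim degree_eq_zeroE)
  with q have k: "?F = smult k (?l z * ?l (cnj z))"
    by simp
  have "coeff ?F 2 = k"
    by (simp add: k linear_factor_def coeff_pCons numeral_2_eq_2)
  then have "k = of_real (coeff f 2)" "coeff f 2 \<noteq> 0"
    using assms(1) leading_coeff_neq_0[OF \<open>f \<noteq> 0\<close>] by auto
  with k \<open>z \<noteq> cnj z\<close> show ?thesis
    using that by blast
qed

lemma power_dvd_iff_of_real_poly:
  assumes "of_real_poly f = smult (of_real c) L" and "c \<noteq> 0"
  shows "f ^ n dvd p \<longleftrightarrow> L ^ n dvd of_real_poly p"
proof -
  have "f ^ n dvd p \<longleftrightarrow> of_real_poly (f ^ n) dvd of_real_poly p"
    by (rule of_real_poly_dvd_iff[symmetric])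
  also have "\<dots> \<longleftrightarrow> L ^ n dvd of_real_poly p"
    using assms by (simp del: of_real_poly_dvd_iff add: smult_power smult_dvd_iff)
  finally show ?thesis .
qed

lemma conjugate_power_dvd_iff:
  assumes "z \<noteq> cnj z"
  shows "(linear_factor z * linear_factor (cnj z)) ^ n dvd of_real_poly p \<longleftrightarrow>
    linear_factor z ^ n dvd of_real_poly p"
proof
  assume "linear_factor z ^ n dvd of_real_poly p"
  moreover from this have "linear_factor (cnj z) ^ n dvd of_real_poly p"
    using cnj_poly_dvd_iff[of "linear_factor z ^ n" "of_real_poly p"] by simp
  moreover have "coprime (linear_factor z ^ n) (linear_factor (cnj z) ^ n)"
    using assms by (rule coprime_linear_factor_powers)
  ultimately show "(linear_factor z * linear_factor (cnj z)) ^ n dvd of_real_poly p"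
    unfolding power_mult_distrib by (rule divides_mult)
qed (simp add: power_mult_distrib dvd_mult_left)

lemma reduction_at_real_root:
  fixes f h :: "real poly" and X Y Z W :: "complex poly"
  assumes eqs: "complex_eqs X Y Z W h Lp Ld" and "qvectorial Lp" "h \<noteq> 0" "X \<noteq> 0 \<or> Y \<noteq> 0"
    and "degree f = 1" and gcd: "f ^ 2 dvd h div gcd (rgcd Lp) h"
  shows "\<exists>u. u * cnj_poly u = of_real_poly (f ^ 2) \<and> reduces_by u X Y Z W"
proof -
  obtain x c where "c \<noteq> 0" and f: "of_real_poly f = smult (of_real c) (linear_factor (of_real x))"
    using real_linear_factorization[OF \<open>degree f = 1\<close>] by blast
  define l where "l = linear_factor (of_real x)"
  define s where "s = multiplicity f h"
  have val: "f ^ n dvd p \<longleftrightarrow> l ^ n dvd of_real_poly p" for n p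
    using power_dvd_iff_of_real_poly[OF f \<open>c \<noteq> 0\<close>] by (simp add: l_def)
  have cl: "cnj_poly l = l"
    by (simp add: l_def)
  have "\<not> is_unit l"
    by (simp add: l_def linear_factor_def is_unit_iff_degree)
  then obtain \<alpha> X1 Y1 where X: "X = l ^ \<alpha> * X1" "Y = l ^ \<alpha> * Y1" and nd: "\<not> (l dvd X1 \<and> l dvd Y1)"
    using max_common_power[OF \<open>X \<noteq> 0 \<or> Y \<noteq> 0\<close>] by blast
  have "cnj_poly X = l ^ \<alpha> * cnj_poly X1" "cnj_poly Y = l ^ \<alpha> * cnj_poly Y1"
    "\<not> (l dvd cnj_poly X1 \<and> l dvd cnj_poly Y1)"
    using X nd cnj_poly_dvd_iff[of l] cl by simp_all
  then have "s \<le> \<alpha> + \<alpha>" "\<alpha> + \<alpha> + 2 \<le> 2 * s"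
    using order_bounds[of f x, folded l_def, OF val prime_elem_degree_1[OF \<open>degree f = 1\<close>]
        \<open>h \<noteq> 0\<close> \<open>qvectorial Lp\<close> eqs X nd _ _ _ gcd]
    unfolding s_def by blast+
  moreover have "dual_dvd (l ^ s) X Y Z W"
    using complex_eqs_dual_dvd[OF eqs] val multiplicity_dvd[of f h]
    unfolding s_def by (blast intro: dual_dvd_trans)
  ultimately have "reduces_by l X Y Z W"
    using reduces_by_real_linear_factor[of x X1 Y1 s \<alpha> Z W] nd unfolding X l_def by simp
  moreover have "l * cnj_poly l = l ^ 2"
    by (simp add: cl power2_eq_square)
  ultimately show ?thesis
    using reduction_rescale f \<open>c \<noteq> 0\<close> unfolding l_def by blast
qed

lemma reduction_at_conjugate_roots:
  fixes f h :: "real poly" and X Y Z W :: "complex poly"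
  assumes eqs: "complex_eqs X Y Z W h Lp Ld" and "qvectorial Lp" "h \<noteq> 0" "X \<noteq> 0 \<or> Y \<noteq> 0"
    and "degree f = 2" "irreducible f" and gcd: "f ^ 2 dvd h div gcd (rgcd Lp) h"
  shows "\<exists>u. u * cnj_poly u = of_real_poly (f ^ 2) \<and> reduces_by u X Y Z W"
proof -
  obtain z c where "z \<noteq> cnj z" "c \<noteq> 0"
    and f: "of_real_poly f = smult (of_real c) (linear_factor z * linear_factor (cnj z))"
    using irreducible_quadratic_factorization[OF \<open>degree f = 2\<close> \<open>irreducible f\<close>] by blast
  define l where "l = linear_factor z"
  define l' where "l' = linear_factor (cnj z)"
  define s where "s = multiplicity f h"
  have val2: "f ^ n dvd p \<longleftrightarrow> (l * l') ^ n dvd of_real_poly p" for n p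
    using power_dvd_iff_of_real_poly[OF f \<open>c \<noteq> 0\<close>] by (simp add: l_def l'_def)
  then have val: "f ^ n dvd p \<longleftrightarrow> l ^ n dvd of_real_poly p" for n p
    using conjugate_power_dvd_iff[OF \<open>z \<noteq> cnj z\<close>] by (simp add: l_def l'_def)
  obtain \<alpha> \<alpha>' X0 Y0 where X: "X = l ^ \<alpha> * l' ^ \<alpha>' * X0" "Y = l ^ \<alpha> * l' ^ \<alpha>' * Y0"
    and nd: "\<not> (l dvd X0 \<and> l dvd Y0)" "\<not> (l' dvd X0 \<and> l' dvd Y0)"
    using max_common_powers_conjugate[OF \<open>X \<noteq> 0 \<or> Y \<noteq> 0\<close>] unfolding l_def l'_def by blast
  have l_not_dvd: "\<not> l dvd l' ^ n" for n
    using \<open>z \<noteq> cnj z\<close> by (simp add: l_def l'_def linear_factor_dvd_power_iff)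
  have "\<not> (l dvd cnj_poly X0 \<and> l dvd cnj_poly Y0)"
    using nd(2) cnj_poly_dvd_iff[of l'] by (simp add: l_def l'_def)
  moreover have "X = l ^ \<alpha> * (l' ^ \<alpha>' * X0)" "Y = l ^ \<alpha> * (l' ^ \<alpha>' * Y0)"
    "cnj_poly X = l ^ \<alpha>' * (l' ^ \<alpha> * cnj_poly X0)" "cnj_poly Y = l ^ \<alpha>' * (l' ^ \<alpha> * cnj_poly Y0)"
    unfolding X by (simp_all add: l_def l'_def mult_ac)
  moreover have "prime_elem f" "prime_elem l"
    using \<open>irreducible f\<close> prime_elem_linear_factor[of z] by (simp_all add: prime_elem_iff_irreducible l_def)
  ultimately have "s \<le> \<alpha> + \<alpha>'" "\<alpha> + \<alpha>' + 2 \<le> 2 * s"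
    using order_bounds[of f z, folded l_def, OF val _ \<open>h \<noteq> 0\<close> \<open>qvectorial Lp\<close> eqs _ _
        not_common_dvd_mult[OF _ l_not_dvd nd(1)] _ _ not_common_dvd_mult[OF _ l_not_dvd] gcd]
    unfolding s_def by blast+
  moreover have "dual_dvd ((l * l') ^ s) X Y Z W"
    using complex_eqs_dual_dvd[OF eqs] val2 multiplicity_dvd[of f h]
    unfolding s_def by (blast intro: dual_dvd_trans)
  ultimately obtain u where "u * cnj_poly u = (l * l') ^ 2" "reduces_by u X Y Z W"
    using reduces_by_conjugate_linear_factors[of z X0 Y0 s \<alpha> \<alpha>' Z W] \<open>z \<noteq> cnj z\<close> nd
    unfolding X l_def l'_def by auto
  then show ?thesis
    using reduction_rescale f \<open>c \<noteq> 0\<close> unfolding l_def l'_def by blast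
qed

theorem lemma8:
  fixes Lp Ld P D :: qpoly and h f :: "real poly"
  assumes "line_poly Lp Ld"
    and "h \<noteq> 0"
    and "motion_poly P D"
    and "three_eqs P D h Lp Ld"
    and "degree f = 1 \<or> (degree f = 2 \<and> irreducible f)"
    and "f ^ 2 dvd h div gcd (rgcd Lp) h"
  shows "\<exists>m::nat. m \<ge> 1 \<and> f ^ (2 * m) dvd h \<and>
           (\<exists>P' D'. motion_poly P' D' \<and> three_eqs P' D' (h div f ^ (2 * m)) Lp Ld)"
proof -
  have vec: "qvectorial Lp" "qvectorial Ld" and "P \<noteq> qzero"
    using assms(1,3) unfolding line_poly_def motion_poly_def by blast+
  then have eqs: "complex_eqs (qfst P) (qsnd P) (qfst D) (qsnd D) h Lp Ld"
    and "qfst P \<noteq> 0 \<or> qsnd P \<noteq> 0"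
    using assms(4) three_eqs_iff_complex_eqs by (auto simp: qzero_iff_qfst_qsnd)
  have "f ^ 2 dvd h"
    using assms(6) by (rule dvd_trans) (metis dvd_mult_div_cancel dvd_triv_right gcd_dvd2)
  obtain u where "u * cnj_poly u = of_real_poly (f ^ 2)"
    and "reduces_by u (qfst P) (qsnd P) (qfst D) (qsnd D)"
    using assms(5) reduction_at_real_root[OF eqs] reduction_at_conjugate_roots[OF eqs]
      vec assms(2,6) \<open>qfst P \<noteq> 0 \<or> qsnd P \<noteq> 0\<close> by blast
  moreover have "f \<noteq> 0"
    using assms(5) by auto
  ultimately have "\<exists>P' D'. motion_poly P' D' \<and> three_eqs P' D' (h div f ^ 2) Lp Ld"
    using reduced_solution_exists[OF eqs vec \<open>P \<noteq> qzero\<close>] \<open>f ^ 2 dvd h\<close> by simp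
  with \<open>f ^ 2 dvd h\<close> show ?thesis
    by (intro exI[of _ 1]) simp
qed

end
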